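(* Let $(P,Q,n)$ be a CI-problem over a field $\mathbb{K}$, and let the intervals $\mathcal I_i,\mathcal J_j\subseteq\mathbf{Z}^2$ ($1\le i,j\le n$) and the integer $m=|P|+|Q|$ be as constructed in the context. If $(i,j)\notin P$, then $\mathrm{Hom}(I^{\mathcal I_i},I^{\mathcal J_j}(1))\cong\mathbb{K}$; more precisely, every morphism $f:I^{\mathcal I_i}\to I^{\mathcal J_j}(1)$ is determined by $f_{(2m+1,2m+1)}\in\mathbb{K}$, and for every $p\in\mathbf{Z}^2$, either $f_p=0$ or $f_p=f_{(2m+1,2m+1)}$. Symmetrically, if $(j,i)\notin Q$, then $\mathrm{Hom}(I^{\mathcal J_j},I^{\mathcal I_i}(1))\cong\mathbb{K}$ with every morphism $g$ determined by $g_{(2m+1,2m+1)}$ and $g_p\in\{0,g_{(2m+1,2m+1)}\}$ for all $p$.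
   Context: A constrained invertibility (CI) problem is a triple $(P,Q,n)$ with $P,Q\subseteq\{1,\dots,n\}^2$; it is solvable if there is an invertible $n\times n$ matrix $A$ over $\mathbb{K}$ with $A_{i,j}=0$ for all $(i,j)\in P$ and $(A^{-1})_{i',j'}=0$ for all $(i',j')\in Q$. Modules are functors $\mathbf{Z}^2\to\mathbf{Vec}_{\mathbb{K}}$ with the product order on $\mathbf{Z}^2$; $M(1)$ denotes the shift $M(1)_a=M_{a+(1,1)}$. For an interval $\mathcal J\subseteq\mathbf{Z}^2$, $I^{\mathcal J}$ is the interval module ($\mathbb{K}$ on $\mathcal J$, $0$ elsewhere, identity maps within $\mathcal J$, zero otherwise). Construction: let $m=|P|+|Q|$. For $p\in\mathbf{Z}^2$ let $\langle p\rangle=\{q\in\mathbf{Z}^2: p\le q\le(2m+2,2m+2)\}$. Let $\mathcal W=\bigcup_{k=0}^m\langle(2m-2k,2k)\rangle$ and $x_k=(2m-2k+1,2k-1)$ for $k=1,\dots,m$. Enumerate $P=\{(p_1,q_1),\dots,(p_r,q_r)\}$ and $Q=\{(p_{r+1},q_{r+1}),\dots,(p_m,q_m)\}$. Set $\mathcal I_i^0=\mathcal J_i^0=\mathcal W$ for all $i$. For $k=1,\dots,r$: $\mathcal I_i^k=\mathcal I_i^{k-1}\cup\langle x_k-(1,1)\rangle$ if $i=p_k$, else $\mathcal I_i^{k-1}\cup\langle x_k\rangle$; $\mathcal J_i^k=\mathcal J_i^{k-1}$ if $i=q_k$, else $\mathcal J_i^{k-1}\cup\langle x_k\rangle$. For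 $k=r+1,\dots,m$: $\mathcal I_i^k=\mathcal I_i^{k-1}$ if $i=q_k$, else $\mathcal I_i^{k-1}\cup\langle x_k\rangle$; $\mathcal J_i^k=\mathcal J_i^{k-1}\cup\langle x_k-(1,1)\rangle$ if $i=p_k$, else $\mathcal J_i^{k-1}\cup\langle x_k\rangle$. Finally $\mathcal I_i=\mathcal I_i^m$, $\mathcal J_i=\mathcal J_i^m$. *)

theory Defs
  imports Main
begin

definition le2 :: "int \<times> int \<Rightarrow> int \<times> int \<Rightarrow> bool" where
  "le2 p q \<longleftrightarrow> fst p \<le> fst q \<and> snd p \<le> snd q"

text \<open>A Z^2-module whose component at p is a subspace sp M p of the field K
  (viewed as a 1-dimensional K-vector space), with structure maps mp M p q for p \<le> q.
  Interval modules and their shifts are of this form.\<close>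
record 'k pmod =
  sp :: "int \<times> int \<Rightarrow> 'k set"
  mp :: "int \<times> int \<Rightarrow> int \<times> int \<Rightarrow> 'k \<Rightarrow> 'k"

text \<open>Morphisms (natural transformations) M \<Rightarrow> N: families of K-linear maps
  f p : sp M p \<rightarrow> sp N p (extensional, i.e. 0 outside sp M p) commuting with structure maps.\<close>
definition Hom :: "'k::field pmod \<Rightarrow> 'k pmod \<Rightarrow> (int \<times> int \<Rightarrow> 'k \<Rightarrow> 'k) set" where
  "Hom M N = {f.
     (\<forall>p x. x \<in> sp M p \<longrightarrow> f p x \<in> sp N p) \<and>
     (\<forall>p x. x \<notin> sp M p \<longrightarrow> f p x = 0) \<and>
     (\<forall>p x y. x \<in> sp M p \<longrightarrow> y \<in> sp M p \<longrightarrow> f p (x + y) = f p x + f p y) \<and>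
     (\<forall>p a x. x \<in> sp M p \<longrightarrow> f p (a * x) = a * f p x) \<and>
     (\<forall>p q x. le2 p q \<longrightarrow> x \<in> sp M p \<longrightarrow> f q (mp M p q x) = mp N p q (f p x))}"

definition interval_module :: "(int \<times> int) set \<Rightarrow> 'k::field pmod" where
  "interval_module A =
     \<lparr> sp = (\<lambda>p. if p \<in> A then UNIV else {0}),
       mp = (\<lambda>p q x. if p \<in> A \<and> q \<in> A then x else 0) \<rparr>"

definition shift1 :: "'k pmod \<Rightarrow> 'k pmod" where
  "shift1 M =
     \<lparr> sp = (\<lambda>p. sp M (fst p + 1, snd p + 1)),
       mp = (\<lambda>p q. mp M (fst p + 1, snd p + 1) (fst q + 1, snd q + 1)) \<rparr>"

definition upset :: "nat \<Rightarrow> int \<times> int \<Rightarrow> (int \<times> int) set" where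
  "upset m p = {q. le2 p q \<and> le2 q (2 * int m + 2, 2 * int m + 2)}"

definition Wset :: "nat \<Rightarrow> (int \<times> int) set" where
  "Wset m = (\<Union>k\<in>{0..m}. upset m (2 * int m - 2 * int k, 2 * int k))"

definition xpt :: "nat \<Rightarrow> nat \<Rightarrow> int \<times> int" where
  "xpt m k = (2 * int m - 2 * int k + 1, 2 * int k - 1)"

definition mm1 :: "int \<times> int \<Rightarrow> int \<times> int" where
  "mm1 p = (fst p - 1, snd p - 1)"

text \<open>e enumerates: e 1..e r are the elements of P, e (r+1)..e m those of Q;
  e k = (p_k, q_k).  CI_I e r m i k = I_i^k and CI_J e r m i k = J_i^k.\<close>
primrec CI_I :: "(nat \<Rightarrow> nat \<times> nat) \<Rightarrow> nat \<Rightarrow> nat \<Rightarrow> nat \<Rightarrow> nat \<Rightarrow> (int \<times> int) set" where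
  "CI_I e r m i 0 = Wset m"
| "CI_I e r m i (Suc k) =
     (if Suc k \<le> r then
        (if i = fst (e (Suc k)) then CI_I e r m i k \<union> upset m (mm1 (xpt m (Suc k)))
         else CI_I e r m i k \<union> upset m (xpt m (Suc k)))
      else
        (if i = snd (e (Suc k)) then CI_I e r m i k
         else CI_I e r m i k \<union> upset m (xpt m (Suc k))))"

primrec CI_J :: "(nat \<Rightarrow> nat \<times> nat) \<Rightarrow> nat \<Rightarrow> nat \<Rightarrow> nat \<Rightarrow> nat \<Rightarrow> (int \<times> int) set" where
  "CI_J e r m i 0 = Wset m"
| "CI_J e r m i (Suc k) =
     (if Suc k \<le> r then
        (if i = snd (e (Suc k)) then CI_J e r m i k
         else CI_J e r m i k \<union> upset m (xpt m (Suc k)))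
      else
        (if i = fst (e (Suc k)) then CI_J e r m i k \<union> upset m (mm1 (xpt m (Suc k)))
         else CI_J e r m i k \<union> upset m (xpt m (Suc k))))"

end

theory Submission
  imports Defs
begin

text \<open>A morphism f : I^A \<rightarrow> I^B(1) is a single scalar: if p \<in> A and p + (1,1) \<in> B then
  p \<le> c = (2m+1, 2m+1), and naturality along p \<le> c gives f_p = f_c, while f_p = 0 otherwise.
  Conversely, that scalar defines a morphism as soon as p + (1,1) \<in> B for every p \<le> c in A.
  For the constructed intervals the diagonal shift maps W below c into W, and each box \<langle>x_k\<rangle>
  into W as well. A box \<langle>x_k - (1,1)\<rangle> is added to I_i only when e k = (i, q_k) \<in> P; if
  (i,j) \<notin> P, then J_j contains \<langle>x_k\<rangle>, which receives the shifted box.\<close>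

abbreviation shift_pt :: "int \<times> int \<Rightarrow> int \<times> int" where
  "shift_pt p \<equiv> (fst p + 1, snd p + 1)"

abbreviation apex :: "nat \<Rightarrow> int \<times> int" where
  "apex m \<equiv> (2 * int m + 1, 2 * int m + 1)"

abbreviation box_top :: "nat \<Rightarrow> int \<times> int" where
  "box_top m \<equiv> (2 * int m + 2, 2 * int m + 2)"

lemma le2_refl [simp]: "le2 p p"
  by (simp add: le2_def)

lemma le2_trans: "le2 p q \<Longrightarrow> le2 q r \<Longrightarrow> le2 p r"
  by (auto simp: le2_def)

lemma sp_interval_module [simp]:
  "sp (interval_module A :: 'k::field pmod) p = (if p \<in> A then UNIV else {0})"
  by (simp add: interval_module_def)

lemma mp_interval_module [simp]:
  "mp (interval_module A :: 'k::field pmod) p q x = (if p \<in> A \<and> q \<in> A then x else 0)"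
  by (simp add: interval_module_def)

lemma sp_shift1 [simp]: "sp (shift1 M) p = sp M (shift_pt p)"
  by (simp add: shift1_def)

lemma mp_shift1 [simp]: "mp (shift1 M) p q = mp M (shift_pt p) (shift_pt q)"
  by (simp add: shift1_def)

lemma HomD:
  assumes "f \<in> Hom M N"
  shows Hom_into: "x \<in> sp M p \<Longrightarrow> f p x \<in> sp N p"
    and Hom_outside: "x \<notin> sp M p \<Longrightarrow> f p x = 0"
    and Hom_scale: "x \<in> sp M p \<Longrightarrow> f p (a * x) = a * f p x"
    and Hom_natural: "le2 p q \<Longrightarrow> x \<in> sp M p \<Longrightarrow> f q (mp M p q x) = mp N p q (f p x)"
  using assms unfolding Hom_def by blast+

definition interval_map :: "(int \<times> int) set \<Rightarrow> (int \<times> int) set \<Rightarrow> 'k::field \<Rightarrow> int \<times> int \<Rightarrow> 'k \<Rightarrow> 'k"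
  where "interval_map A B a p x = (if p \<in> A \<and> shift_pt p \<in> B then a * x else 0)"

lemma Hom_interval_shift_eq_interval_map:
  fixes f :: "int \<times> int \<Rightarrow> 'k::field \<Rightarrow> 'k"
  assumes f: "f \<in> Hom (interval_module A) (shift1 (interval_module B))"
    and below: "\<And>p. shift_pt p \<in> B \<Longrightarrow> le2 p c"
    and cA: "c \<in> A" and cB: "shift_pt c \<in> B"
  shows "f = interval_map A B (f c 1)"
proof (intro ext)
  fix p and x :: 'k
  show "f p x = interval_map A B (f c 1) p x"
  proof (cases "p \<in> A \<and> shift_pt p \<in> B")
    case True
    then have "f c x = f p x"
      using Hom_natural[OF f below, of p x] cA cB by simp
    then show ?thesis
      using True Hom_scale[OF f, of 1 c x] cA by (simp add: interval_map_def)
  next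
    case False
    have "f p 0 = 0"
      using Hom_scale[OF f, of 0 p 0] by simp
    then show ?thesis
      using False Hom_into[OF f, of x p] Hom_outside[OF f, of x p]
      by (cases "p \<in> A"; cases "x = 0") (auto simp: interval_map_def)
  qed
qed

lemma interval_map_in_Hom:
  fixes a :: "'k::field"
  assumes up: "\<And>p q. p \<in> A \<Longrightarrow> le2 p q \<Longrightarrow> le2 q c \<Longrightarrow> q \<in> A"
    and below: "\<And>p. shift_pt p \<in> B \<Longrightarrow> le2 p c"
    and shift: "\<And>p. p \<in> A \<Longrightarrow> le2 p c \<Longrightarrow> shift_pt p \<in> B"
  shows "interval_map A B a \<in> Hom (interval_module A) (shift1 (interval_module B))"
proof -
  have support: "(q \<in> A \<and> shift_pt q \<in> B) = (shift_pt p \<in> B \<and> shift_pt q \<in> B)"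
    if "le2 p q" "p \<in> A" for p q
    using that up below shift le2_trans by metis
  show ?thesis
    unfolding Hom_def
  proof (intro CollectI conjI allI impI)
    fix p q and x :: 'k
    assume "le2 p q" "x \<in> sp (interval_module A) p"
    then show "interval_map A B a q (mp (interval_module A) p q x)
        = mp (shift1 (interval_module B)) p q (interval_map A B a p x)"
      using support[of p q] by (auto simp: interval_map_def split: if_splits)
  qed (auto simp: interval_map_def algebra_simps)
qed

lemma Hom_interval_shift_iso:
  fixes c :: "int \<times> int"
  assumes up: "\<And>p q. p \<in> A \<Longrightarrow> le2 p q \<Longrightarrow> le2 q c \<Longrightarrow> q \<in> A"
    and below: "\<And>p. shift_pt p \<in> B \<Longrightarrow> le2 p c"
    and shift: "\<And>p. p \<in> A \<Longrightarrow> le2 p c \<Longrightarrow> shift_pt p \<in> B"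
    and cA: "c \<in> A"
  shows "bij_betw (\<lambda>f. f c 1) (Hom (interval_module A) (shift1 (interval_module B)))
           (UNIV :: 'k::field set)
    \<and> (\<forall>f \<in> Hom (interval_module A) (shift1 (interval_module B)).
         \<forall>p. f p = (\<lambda>_. (0::'k)) \<or> f p = f c)"
proof -
  have cB: "shift_pt c \<in> B"
    using shift[OF cA le2_refl] .
  note eq = Hom_interval_shift_eq_interval_map[OF _ below cA cB]
  have "bij_betw (\<lambda>f. f c 1) (Hom (interval_module A) (shift1 (interval_module B)))
          (UNIV :: 'k set)"
  proof (rule bij_betw_byWitness[where f' = "interval_map A B"])
    show "interval_map A B ` UNIV \<subseteq> Hom (interval_module A) (shift1 (interval_module B))"
      using up below shift by (intro image_subsetI interval_map_in_Hom) blast+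
  qed (use eq cA cB in \<open>auto simp: interval_map_def intro: sym\<close>)
  moreover have "f p = (\<lambda>_. 0) \<or> f p = f c"
    if "f \<in> Hom (interval_module A) (shift1 (interval_module B))" for f :: "_ \<Rightarrow> 'k \<Rightarrow> 'k" and p
  proof -
    define a where "a = f c 1"
    have fq: "f q = (\<lambda>x. if q \<in> A \<and> shift_pt q \<in> B then a * x else 0)" for q
      using fun_cong[OF eq[OF that], of q] unfolding a_def by (auto simp: interval_map_def)
    show ?thesis
      using fq[of p] fq[of c] cA cB by (cases "p \<in> A \<and> shift_pt p \<in> B") auto
  qed
  ultimately show ?thesis
    by blast
qed

definition upclosed_in_box :: "nat \<Rightarrow> (int \<times> int) set \<Rightarrow> bool" where
  "upclosed_in_box m S \<longleftrightarrow>
     (\<forall>p \<in> S. le2 p (box_top m) \<and> (\<forall>q. le2 p q \<longrightarrow> le2 q (box_top m) \<longrightarrow> q \<in> S))"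

lemma upclosed_in_box_upset: "upclosed_in_box m (upset m a)"
  by (auto simp: upclosed_in_box_def upset_def le2_def)

lemma upclosed_in_box_Un:
  "upclosed_in_box m S \<Longrightarrow> upclosed_in_box m T \<Longrightarrow> upclosed_in_box m (S \<union> T)"
  by (auto simp: upclosed_in_box_def)

lemma upclosed_in_box_Wset: "upclosed_in_box m (Wset m)"
  using upclosed_in_box_upset by (fastforce simp: upclosed_in_box_def Wset_def)

lemma upclosed_in_box_CI_I: "upclosed_in_box m (CI_I e r m i k)"
  by (induction k) (auto intro: upclosed_in_box_Wset upclosed_in_box_Un upclosed_in_box_upset)

lemma upclosed_in_box_CI_J: "upclosed_in_box m (CI_J e r m i k)"
  by (induction k) (auto intro: upclosed_in_box_Wset upclosed_in_box_Un upclosed_in_box_upset)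

lemma Hom_interval_shift_iso_in_box:
  assumes "upclosed_in_box m A" and "upclosed_in_box m B" and "apex m \<in> A"
    and "\<And>p. p \<in> A \<Longrightarrow> le2 p (apex m) \<Longrightarrow> shift_pt p \<in> B"
  shows "bij_betw (\<lambda>f. f (apex m) 1) (Hom (interval_module A) (shift1 (interval_module B)))
           (UNIV :: 'k::field set)
    \<and> (\<forall>f \<in> Hom (interval_module A) (shift1 (interval_module B)).
         \<forall>p. f p = (\<lambda>_. (0::'k)) \<or> f p = f (apex m))"
proof (rule Hom_interval_shift_iso)
  show "q \<in> A" if "p \<in> A" "le2 p q" "le2 q (apex m)" for p q
  proof -
    have "le2 q (box_top m)"
      using that(3) by (auto simp: le2_def)
    then show ?thesis
      using assms(1) that(1,2) unfolding upclosed_in_box_def by blast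
  qed
  show "le2 p (apex m)" if "shift_pt p \<in> B" for p
    using assms(2) that by (auto simp: upclosed_in_box_def le2_def)
qed (use assms in auto)

lemma apex_in_Wset: "apex m \<in> Wset m"
  unfolding Wset_def upset_def le2_def by (rule UN_I[of 0]) auto

lemma Wset_subset_CI_I: "Wset m \<subseteq> CI_I e r m i k"
  by (induction k) auto

lemma Wset_subset_CI_J: "Wset m \<subseteq> CI_J e r m i k"
  by (induction k) auto

lemma CI_J_mono: "k \<le> l \<Longrightarrow> CI_J e r m i k \<subseteq> CI_J e r m i l"
  by (rule lift_Suc_mono_le[of "CI_J e r m i"]) auto

lemma CI_I_mono: "k \<le> l \<Longrightarrow> CI_I e r m i k \<subseteq> CI_I e r m i l"
  by (rule lift_Suc_mono_le[of "CI_I e r m i"]) auto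

lemma shift_Wset: "p \<in> Wset m \<Longrightarrow> le2 p (apex m) \<Longrightarrow> shift_pt p \<in> Wset m"
  unfolding Wset_def upset_def le2_def by fastforce

text \<open>x_k + (1,1) is the generator (2m - 2(k-1), 2(k-1)) of W.\<close>
lemma shift_upset_xpt:
  assumes "1 \<le> k" "k \<le> m" "p \<in> upset m (xpt m k)" "le2 p (apex m)"
  shows "shift_pt p \<in> Wset m"
proof -
  have "shift_pt p \<in> upset m (2 * int m - 2 * int (k - 1), 2 * int (k - 1))"
    using assms unfolding upset_def le2_def xpt_def by (auto simp: of_nat_diff)
  moreover have "k - 1 \<in> {0..m}"
    using assms by auto
  ultimately show ?thesis
    unfolding Wset_def by blast
qed

lemma shift_upset_mm1:
  "p \<in> upset m (mm1 a) \<Longrightarrow> le2 p (apex m) \<Longrightarrow> shift_pt p \<in> upset m a"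
  unfolding upset_def le2_def mm1_def by auto

lemma shift_mem_of_growth:
  fixes I :: "nat \<Rightarrow> (int \<times> int) set" and J :: "(int \<times> int) set"
  assumes base: "I 0 \<subseteq> Wset m" and W: "Wset m \<subseteq> J"
    and growth: "\<And>k. k < m \<Longrightarrow>
      I (Suc k) \<subseteq> I k \<union> upset m (xpt m (Suc k))
      \<or> I (Suc k) \<subseteq> I k \<union> upset m (mm1 (xpt m (Suc k))) \<and> upset m (xpt m (Suc k)) \<subseteq> J"
  shows "k \<le> m \<Longrightarrow> p \<in> I k \<Longrightarrow> le2 p (apex m) \<Longrightarrow> shift_pt p \<in> J"
proof (induction k arbitrary: p)
  case 0
  then show ?case
    using base W shift_Wset by blast
next
  case (Suc k)
  from growth[of k] Suc.prems(1) consider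
      (old) "p \<in> I k"
    | (box) "p \<in> upset m (xpt m (Suc k))"
    | (lower_box) "p \<in> upset m (mm1 (xpt m (Suc k)))" "upset m (xpt m (Suc k)) \<subseteq> J"
    using Suc.prems(2) by auto
  then show ?case
  proof cases
    case old
    then show ?thesis using Suc by simp
  next
    case box
    then show ?thesis using shift_upset_xpt[OF _ Suc.prems(1) box Suc.prems(3)] W by auto
  next
    case lower_box
    then show ?thesis using shift_upset_mm1[OF lower_box(1) Suc.prems(3)] by blast
  qed
qed

lemma shift_CI_I_mem_CI_J:
  assumes "\<forall>k \<in> {1..r}. e k \<noteq> (i, j)"
    and "p \<in> CI_I e r m i m" and "le2 p (apex m)"
  shows "shift_pt p \<in> CI_J e r m j m"
proof (rule shift_mem_of_growth[where I = "CI_I e r m i", OF _ Wset_subset_CI_J _ le_refl assms(2,3)])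
  fix k assume "k < m"
  have "upset m (xpt m (Suc k)) \<subseteq> CI_J e r m j m"
    if "Suc k \<le> r" "i = fst (e (Suc k))"
  proof -
    have "j \<noteq> snd (e (Suc k))"
      using assms(1) that by (cases "e (Suc k)") auto
    then have "upset m (xpt m (Suc k)) \<subseteq> CI_J e r m j (Suc k)"
      using that by auto
    then show ?thesis
      using CI_J_mono[of "Suc k" m e r m j] \<open>k < m\<close> by auto
  qed
  then show "CI_I e r m i (Suc k) \<subseteq> CI_I e r m i k \<union> upset m (xpt m (Suc k))
      \<or> CI_I e r m i (Suc k) \<subseteq> CI_I e r m i k \<union> upset m (mm1 (xpt m (Suc k)))
        \<and> upset m (xpt m (Suc k)) \<subseteq> CI_J e r m j m"
    by auto
qed simp

lemma shift_CI_J_mem_CI_I: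
  assumes "\<forall>k \<in> {r + 1..m}. e k \<noteq> (j, i)"
    and "p \<in> CI_J e r m j m" and "le2 p (apex m)"
  shows "shift_pt p \<in> CI_I e r m i m"
proof (rule shift_mem_of_growth[where I = "CI_J e r m j", OF _ Wset_subset_CI_I _ le_refl assms(2,3)])
  fix k assume "k < m"
  have "upset m (xpt m (Suc k)) \<subseteq> CI_I e r m i m"
    if "\<not> Suc k \<le> r" "j = fst (e (Suc k))"
  proof -
    have "i \<noteq> snd (e (Suc k))"
      using assms(1) that \<open>k < m\<close> by (cases "e (Suc k)") auto
    then have "upset m (xpt m (Suc k)) \<subseteq> CI_I e r m i (Suc k)"
      using that by auto
    then show ?thesis
      using CI_I_mono[of "Suc k" m e r m i] \<open>k < m\<close> by auto
  qed
  then show "CI_J e r m j (Suc k) \<subseteq> CI_J e r m j k \<union> upset m (xpt m (Suc k))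
      \<or> CI_J e r m j (Suc k) \<subseteq> CI_J e r m j k \<union> upset m (mm1 (xpt m (Suc k)))
        \<and> upset m (xpt m (Suc k)) \<subseteq> CI_I e r m i m"
    by auto
qed simp

theorem mainTheorem5:
  fixes P Q :: "(nat \<times> nat) set" and n :: nat and e :: "nat \<Rightarrow> nat \<times> nat"
    and i j :: nat
  assumes "P \<subseteq> {1..n} \<times> {1..n}" and "Q \<subseteq> {1..n} \<times> {1..n}"
    and "bij_betw e {1..card P} P"
    and "bij_betw e {card P + 1..card P + card Q} Q"
    and "i \<in> {1..n}" and "j \<in> {1..n}"
  shows "let r = card P; m = card P + card Q; c = (2 * int m + 1, 2 * int m + 1);
             Ii = CI_I e r m i m; Jj = CI_J e r m j m in
         ((i, j) \<notin> P \<longrightarrow>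
            bij_betw (\<lambda>f. f c 1)
              (Hom (interval_module Ii) (shift1 (interval_module Jj))) (UNIV :: 'k::field set) \<and>
            (\<forall>f \<in> Hom (interval_module Ii) (shift1 (interval_module Jj)).
               \<forall>p. f p = (\<lambda>_. (0::'k)) \<or> f p = f c)) \<and>
         ((j, i) \<notin> Q \<longrightarrow>
            bij_betw (\<lambda>g. g c 1)
              (Hom (interval_module Jj) (shift1 (interval_module Ii))) (UNIV :: 'k set) \<and>
            (\<forall>g \<in> Hom (interval_module Jj) (shift1 (interval_module Ii)).
               \<forall>p. g p = (\<lambda>_. (0::'k)) \<or> g p = g c))"
proof -
  let ?r = "card P" and ?m = "card P + card Q"
  have "\<forall>k \<in> {1..?r}. e k \<noteq> (i, j)" if "(i, j) \<notin> P"
    using that bij_betw_apply[OF assms(3)] by metis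
  then have IJ: "(i, j) \<notin> P \<Longrightarrow> p \<in> CI_I e ?r ?m i ?m \<Longrightarrow> le2 p (apex ?m)
      \<Longrightarrow> shift_pt p \<in> CI_J e ?r ?m j ?m" for p
    using shift_CI_I_mem_CI_J by blast
  have "\<forall>k \<in> {?r + 1..?m}. e k \<noteq> (j, i)" if "(j, i) \<notin> Q"
    using that bij_betw_apply[OF assms(4)] by metis
  then have JI: "(j, i) \<notin> Q \<Longrightarrow> p \<in> CI_J e ?r ?m j ?m \<Longrightarrow> le2 p (apex ?m)
      \<Longrightarrow> shift_pt p \<in> CI_I e ?r ?m i ?m" for p
    using shift_CI_J_mem_CI_I by blast
  have "apex ?m \<in> CI_I e ?r ?m i ?m" "apex ?m \<in> CI_J e ?r ?m j ?m"
    using apex_in_Wset Wset_subset_CI_I Wset_subset_CI_J by blast+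
  then show ?thesis
    unfolding Let_def
    using Hom_interval_shift_iso_in_box[OF upclosed_in_box_CI_I upclosed_in_box_CI_J _ IJ]
      Hom_interval_shift_iso_in_box[OF upclosed_in_box_CI_J upclosed_in_box_CI_I _ JI]
    by blast
qed

end
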